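(* For every $[t_0:t_1]\in\mathbb{P}^1_{\mathbb{C}}$ with $[t_0:t_1]\neq[1:0]$, the polynomial $F^{[t_0:t_1]}_{S_2}=t_0F_{S_2}(x_2^3-x_3^3)+t_1\left(G_2-F_{S_2}(x_2^3-x_3^3)\right)$ defines an irreducible surface in $\mathbb{P}^3_{\mathbb{C}}$.
   Context: $\mathbb{P}^3_{\mathbb{C}}=\operatorname{Proj}\mathbb{C}[x_0,\dots,x_3]$, $F_{S_1}=x_0^9+(x_1^3-x_2^3)(x_2^3-x_3^3)(x_3^3-x_1^3)$, $F_{S_2}=F_{S_1}(x_0^9-x_1^3x_2^3x_3^3)+x_1^6x_2^6x_3^6$, $G_2=x_0^{21}+x_1^{21}+x_2^{21}-x_3^{21}$. *)

theory Defs
  imports "HOL-Computational_Algebra.Polynomial_Factorial"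
begin

text \<open>Polynomials in C[x0,x1,x2,x3], represented as iterated univariate polynomials
  ((C[x0])[x1])[x2])[x3]: the outermost polynomial variable is x3, the innermost is x0.\<close>

type_synonym mpoly4 = "complex poly poly poly poly"

definition X0 :: mpoly4 where "X0 = [:[:[:[:0, 1:]:]:]:]"
definition X1 :: mpoly4 where "X1 = [:[:[:0, 1:]:]:]"
definition X2 :: mpoly4 where "X2 = [:[:0, 1:]:]"
definition X3 :: mpoly4 where "X3 = [:0, 1:]"

definition const4 :: "complex \<Rightarrow> mpoly4" where "const4 c = [:[:[:[:c:]:]:]:]"

definition F_S1 :: mpoly4 where
  "F_S1 = X0^9 + (X1^3 - X2^3) * (X2^3 - X3^3) * (X3^3 - X1^3)"

definition F_S2 :: mpoly4 where
  "F_S2 = F_S1 * (X0^9 - X1^3 * X2^3 * X3^3) + X1^6 * X2^6 * X3^6"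

definition G_2 :: mpoly4 where
  "G_2 = X0^21 + X1^21 + X2^21 - X3^21"

definition F_S2_pencil :: "complex \<Rightarrow> complex \<Rightarrow> mpoly4" where
  "F_S2_pencil t0 t1 =
     const4 t0 * (F_S2 * (X2^3 - X3^3)) + const4 t1 * (G_2 - F_S2 * (X2^3 - X3^3))"

end

theory Submission
  imports Defs
begin

text \<open>Exchanging \<open>x1\<close> and \<open>x3\<close> turns the pencil into a polynomial of degree 21 in the outermost
  variable whose leading coefficient is the constant \<open>t1\<close>, nonzero because
  \<open>[t0:t1] \<noteq> [1:0]\<close>. Restricting the coefficients to the line \<open>(x0, x1, x2) = (0, 1, 1 + y)\<close>
  and then putting \<open>y = 0\<close> kills every lower coefficient, while the constant coefficient restricts
  to \<open>t1 ((1 + y)^21 - 1)\<close>, which vanishes only to first order at \<open>y = 0\<close>. This is Eisenstein's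
  criterion for the kernel of the restriction, so the swapped pencil is irreducible, and so is the
  pencil itself.\<close>

locale comm_ring_hom =
  fixes hom :: "'a::comm_ring_1 \<Rightarrow> 'b::comm_ring_1"
  assumes hom_add: "hom (x + y) = hom x + hom y"
    and hom_mult: "hom (x * y) = hom x * hom y"
    and hom_one: "hom 1 = 1"
begin

lemma hom_zero: "hom 0 = 0"
  using hom_add[of 0 0] by simp

lemma hom_diff: "hom (x - y) = hom x - hom y"
  using hom_add[of "x - y" y] by (simp add: algebra_simps)

lemma hom_power: "hom (x ^ n) = hom x ^ n"
  by (induction n) (simp_all add: hom_one hom_mult)

lemma hom_dvd_1: "x dvd 1 \<Longrightarrow> hom x dvd 1"
  by (metis dvdE dvdI hom_mult hom_one)

lemma map_poly_hom_smult: "map_poly hom (smult a p) = smult (hom a) (map_poly hom p)"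
  by (simp add: map_poly_smult hom_zero hom_mult)

lemma comm_ring_hom_map_poly: "comm_ring_hom (map_poly hom)"
proof
  show add: "map_poly hom (p + q) = map_poly hom p + map_poly hom q" for p q
    by (intro poly_eqI) (simp add: coeff_map_poly hom_zero hom_add)
  show "map_poly hom (p * q) = map_poly hom p * map_poly hom q" for p q
    by (induction p) (simp_all add: map_poly_pCons hom_zero add map_poly_hom_smult)
  show "map_poly hom 1 = 1"
    by (simp add: hom_one)
qed

end

lemma comm_ring_hom_comp:
  "comm_ring_hom f \<Longrightarrow> comm_ring_hom g \<Longrightarrow> comm_ring_hom (\<lambda>x. f (g x))"
  by (simp add: comm_ring_hom_def)

lemma comm_ring_hom_poly: "comm_ring_hom (\<lambda>p. poly p x)"
  by standard simp_all

lemma comm_ring_hom_const_poly: "comm_ring_hom (\<lambda>c. [:c:])"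
  by standard (simp_all add: one_pCons)

lemma comm_ring_hom_eqI:
  fixes f g :: "'a::comm_ring_1 poly \<Rightarrow> 'b::comm_ring_1"
  assumes "comm_ring_hom f" "comm_ring_hom g"
    and "f [:0, 1:] = g [:0, 1:]" "\<And>c. f [:c:] = g [:c:]"
  shows "f p = g p"
proof (induction p)
  case 0
  then show ?case
    using assms(1,2) by (simp add: comm_ring_hom.hom_zero)
next
  case (pCons a p)
  have "pCons a p = [:a:] + [:0, 1:] * p"
    by simp
  then show ?case
    using pCons.IH assms
    by (simp only: comm_ring_hom.hom_add[OF assms(1)] comm_ring_hom.hom_mult[OF assms(1)]
        comm_ring_hom.hom_add[OF assms(2)] comm_ring_hom.hom_mult[OF assms(2)])
qed

definition eval_poly :: "('a::zero \<Rightarrow> 'b::comm_semiring_1) \<Rightarrow> 'b \<Rightarrow> 'a poly \<Rightarrow> 'b" where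
  "eval_poly h x p = poly (map_poly h p) x"

lemma eval_poly_0 [simp]: "eval_poly h x 0 = 0"
  by (simp add: eval_poly_def)

lemma eval_poly_pCons [simp]: "h 0 = 0 \<Longrightarrow> eval_poly h x (pCons a p) = h a + x * eval_poly h x p"
  by (simp add: eval_poly_def map_poly_pCons)

lemma eval_poly_1 [simp]: "h 0 = 0 \<Longrightarrow> eval_poly h x 1 = h 1"
  by (simp add: eval_poly_def map_poly_1)

lemma comm_ring_hom_eval_poly: "comm_ring_hom h \<Longrightarrow> comm_ring_hom (eval_poly h x)"
  unfolding eval_poly_def
  by (rule comm_ring_hom_comp[OF comm_ring_hom_poly comm_ring_hom.comm_ring_hom_map_poly])

lemma irreducible_if_irreducible_image:
  assumes "comm_ring_hom f" "comm_ring_hom g" "\<And>x. g (f x) = x"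
    and "irreducible (f p)"
  shows "irreducible p"
proof (rule irreducibleI)
  show "p \<noteq> 0"
    using assms(1,4) comm_ring_hom.hom_zero by fastforce
  show "\<not> p dvd 1"
    using assms(4) irreducible_not_unit comm_ring_hom.hom_dvd_1[OF assms(1)] by blast
  fix a b
  assume "p = a * b"
  then have "f a dvd 1 \<or> f b dvd 1"
    using assms(1,4) by (simp add: comm_ring_hom.hom_mult irreducibleD)
  then show "a dvd 1 \<or> b dvd 1"
    using assms(2,3) comm_ring_hom.hom_dvd_1 by metis
qed

lemma coeff_0_eq_0_if_dvd_monom:
  fixes a b :: "'a::idom poly"
  assumes "a * b = monom c n" "c \<noteq> 0" "degree a > 0"
  shows "coeff a 0 = 0"
proof -
  have nz: "a * b \<noteq> 0"
    using assms(1,2) by simp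
  then have "a \<noteq> 0" "b \<noteq> 0"
    by auto
  then have "degree a + degree b = n"
    using assms(1,2) by (metis degree_monom_eq degree_mult_eq)
  moreover have "order 0 a + order 0 b = n"
  proof -
    have "order 0 ([:0, 1:] ^ n :: 'a poly) = n"
      using order_power_n_n[of "0::'a" n] by simp
    then have "order 0 (monom c n) = n"
      using assms(2) by (simp add: monom_altdef order_smult)
    then show ?thesis
      using order_mult[OF nz, of 0] assms(1) by simp
  qed
  moreover have "order 0 a \<le> degree a" "order 0 b \<le> degree b"
    using \<open>a \<noteq> 0\<close> \<open>b \<noteq> 0\<close> by (simp_all add: order_degree)
  ultimately have "order 0 a \<noteq> 0"
    using assms(3) by linarith
  then show ?thesis
    by (simp add: order_root poly_0_coeff_0[symmetric])
qed

lemma eisenstein_factor_degree_0: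
  fixes Q :: "'a::idom poly" and h :: "'a \<Rightarrow> 'b::idom poly"
  assumes "comm_ring_hom h"
    and lower: "\<And>i. i < degree Q \<Longrightarrow> poly (h (coeff Q i)) 0 = 0"
    and lead: "poly (h (lead_coeff Q)) 0 \<noteq> 0"
    and const: "coeff (h (coeff Q 0)) 1 \<noteq> 0"
    and "Q = A * B"
  shows "degree A = 0 \<or> degree B = 0"
proof (rule ccontr)
  assume "\<not> (degree A = 0 \<or> degree B = 0)"
  then have pos: "degree A > 0" "degree B > 0"
    by auto
  define r where "r a = poly (h a) 0" for a
  have hom_r: "comm_ring_hom r"
    unfolding r_def using comm_ring_hom_comp[OF comm_ring_hom_poly assms(1)] .
  then have hom_map_r: "comm_ring_hom (map_poly r)"
    by (rule comm_ring_hom.comm_ring_hom_map_poly)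
  have r0: "r 0 = 0"
    using hom_r by (rule comm_ring_hom.hom_zero)
  have "map_poly r Q = monom (r (lead_coeff Q)) (degree Q)"
  proof (rule poly_eqI)
    fix i
    show "coeff (map_poly r Q) i = coeff (monom (r (lead_coeff Q)) (degree Q)) i"
      using lower[of i] r0 by (cases i "degree Q" rule: linorder_cases)
        (simp_all add: coeff_map_poly r_def coeff_eq_0)
  qed
  then have prod: "map_poly r A * map_poly r B = monom (r (lead_coeff Q)) (degree Q)"
    using \<open>Q = A * B\<close> comm_ring_hom.hom_mult[OF hom_map_r, of A B] by simp
  have lead_r: "r (lead_coeff Q) \<noteq> 0"
    using lead by (simp add: r_def)
  have "A \<noteq> 0" "B \<noteq> 0"
    using pos by auto
  then have "degree A + degree B = degree Q"
    using \<open>Q = A * B\<close> by (simp add: degree_mult_eq)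
  moreover have "degree (map_poly r A) + degree (map_poly r B) = degree Q"
  proof -
    have "map_poly r A \<noteq> 0" "map_poly r B \<noteq> 0"
      using prod lead_r by auto
    moreover have "degree (map_poly r A * map_poly r B) = degree Q"
      using prod lead_r by (simp add: degree_monom_eq)
    ultimately show ?thesis
      by (simp add: degree_mult_eq)
  qed
  moreover have "degree (map_poly r A) \<le> degree A" "degree (map_poly r B) \<le> degree B"
    by (simp_all add: map_poly_degree_leq)
  ultimately have "degree (map_poly r A) > 0" "degree (map_poly r B) > 0"
    using pos by linarith+
  moreover have "map_poly r B * map_poly r A = monom (r (lead_coeff Q)) (degree Q)"
    using prod by (simp only: mult.commute)
  ultimately have "coeff (map_poly r A) 0 = 0" "coeff (map_poly r B) 0 = 0"
    using coeff_0_eq_0_if_dvd_monom[OF prod lead_r] coeff_0_eq_0_if_dvd_monom[OF _ lead_r]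
    by blast+
  then have "coeff (h (coeff A 0)) 0 = 0" "coeff (h (coeff B 0)) 0 = 0"
    by (simp_all add: coeff_map_poly[of r, OF r0] r_def poly_0_coeff_0)
  moreover have "h (coeff Q 0) = h (coeff A 0) * h (coeff B 0)"
    using \<open>Q = A * B\<close> comm_ring_hom.hom_mult[OF assms(1)] by (simp add: coeff_mult_0)
  ultimately have "coeff (h (coeff Q 0)) 1 = 0"
    by (simp add: coeff_mult)
  with const show False
    by contradiction
qed

lemma irreducible_if_factors_degree_0:
  fixes Q :: "'a::idom poly"
  assumes "lead_coeff Q dvd 1" "degree Q > 0"
    and "\<And>A B. Q = A * B \<Longrightarrow> degree A = 0 \<or> degree B = 0"
  shows "irreducible Q"
proof (rule irreducibleI)
  show "Q \<noteq> 0" "\<not> Q dvd 1"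
    using assms(2) by (auto simp: is_unit_poly_iff)
  have "A dvd 1" if "Q = A * B \<or> Q = B * A" "degree A = 0" for A B
  proof -
    obtain a where "A = [:a:]"
      using \<open>degree A = 0\<close> degree_eq_zeroE by blast
    then have "lead_coeff Q = a * lead_coeff B"
      using that(1) by (auto simp: mult.commute)
    then show "A dvd 1"
      using assms(1) \<open>A = [:a:]\<close> by (simp add: is_unit_const_poly_iff dvd_mult_left)
  qed
  then show "A dvd 1 \<or> B dvd 1" if "Q = A * B" for A B
    using assms(3) that by blast
qed

lemma eisenstein_irreducible:
  fixes Q :: "'a::idom poly" and h :: "'a \<Rightarrow> 'b::idom poly"
  assumes "comm_ring_hom h" "lead_coeff Q dvd 1" "degree Q > 0"
    and "\<And>i. i < degree Q \<Longrightarrow> poly (h (coeff Q i)) 0 = 0"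
    and "coeff (h (coeff Q 0)) 1 \<noteq> 0"
  shows "irreducible Q"
proof (rule irreducible_if_factors_degree_0[OF assms(2,3)])
  have "comm_ring_hom (\<lambda>a. poly (h a) 0)"
    using comm_ring_hom_comp[OF comm_ring_hom_poly assms(1)] .
  then have "poly (h (lead_coeff Q)) 0 dvd 1"
    using assms(2) by (rule comm_ring_hom.hom_dvd_1)
  then have "poly (h (lead_coeff Q)) 0 \<noteq> 0"
    by auto
  then show "degree A = 0 \<or> degree B = 0" if "Q = A * B" for A B
    using assms(1,4,5) that by (intro eisenstein_factor_degree_0)
qed

lemma comm_ring_hom_const4: "comm_ring_hom const4"
proof -
  have "comm_ring_hom (\<lambda>c::complex. [:[:[:[:c:]:]:]:])"
    using comm_ring_hom_comp[OF comm_ring_hom_const_poly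
        comm_ring_hom_comp[OF comm_ring_hom_const_poly
          comm_ring_hom_comp[OF comm_ring_hom_const_poly comm_ring_hom_const_poly]]] .
  then show ?thesis
    by (simp add: const4_def[abs_def])
qed

lemma mpoly4_hom_eqI:
  fixes f g :: "mpoly4 \<Rightarrow> 'b::comm_ring_1"
  assumes hom: "comm_ring_hom f" "comm_ring_hom g"
    and "f X0 = g X0" "f X1 = g X1" "f X2 = g X2" "f X3 = g X3"
    and "\<And>c. f (const4 c) = g (const4 c)"
  shows "f p = g p"
proof -
  have hom_const: "comm_ring_hom (\<lambda>x. h [:x:])"
    if "comm_ring_hom h" for h :: "'c::comm_ring_1 poly \<Rightarrow> 'b"
    using comm_ring_hom_comp[OF that comm_ring_hom_const_poly] .
  note homs =
    hom_const[OF hom_const[OF hom_const[OF hom(1)]]] hom_const[OF hom_const[OF hom_const[OF hom(2)]]]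
    hom_const[OF hom_const[OF hom(1)]] hom_const[OF hom_const[OF hom(2)]]
    hom_const[OF hom(1)] hom_const[OF hom(2)] hom
  have level0: "f [:[:[:c:]:]:] = g [:[:[:c:]:]:]" for c
  proof (rule comm_ring_hom_eqI[OF homs(1,2)])
    show "f [:[:[:[:0, 1:]:]:]:] = g [:[:[:[:0, 1:]:]:]:]"
      using assms(3) by (simp only: X0_def)
    show "f [:[:[:[:d:]:]:]:] = g [:[:[:[:d:]:]:]:]" for d
      using assms(7)[of d] by (simp only: const4_def)
  qed
  have level1: "f [:[:r:]:] = g [:[:r:]:]" for r
    by (rule comm_ring_hom_eqI[OF homs(3,4)]) (use assms(4) level0 in \<open>simp_all only: X1_def\<close>)
  have level2: "f [:q:] = g [:q:]" for q
    by (rule comm_ring_hom_eqI[OF homs(5,6)]) (use assms(5) level1 in \<open>simp_all only: X2_def\<close>)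
  show ?thesis
    by (rule comm_ring_hom_eqI[OF homs(7,8)]) (use assms(6) level2 in \<open>simp_all only: X3_def\<close>)
qed

definition swap_x1_x3 :: "mpoly4 \<Rightarrow> mpoly4" where
  "swap_x1_x3 = eval_poly (eval_poly (eval_poly (eval_poly const4 X0) X3) X2) X1"

lemma comm_ring_hom_swap_x1_x3: "comm_ring_hom swap_x1_x3"
  unfolding swap_x1_x3_def by (intro comm_ring_hom_eval_poly comm_ring_hom_const4)

lemma swap_x1_x3_simps:
  "swap_x1_x3 X0 = X0" "swap_x1_x3 X1 = X3" "swap_x1_x3 X2 = X2" "swap_x1_x3 X3 = X1"
  "swap_x1_x3 (const4 c) = const4 c"
  by (simp_all add: swap_x1_x3_def X0_def X1_def X2_def X3_def const4_def one_pCons[symmetric])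

lemma swap_x1_x3_swap_x1_x3 [simp]: "swap_x1_x3 (swap_x1_x3 p) = p"
proof (rule mpoly4_hom_eqI[where g = "\<lambda>p. p"])
  show "comm_ring_hom (\<lambda>p. swap_x1_x3 (swap_x1_x3 p))"
    using comm_ring_hom_comp[OF comm_ring_hom_swap_x1_x3 comm_ring_hom_swap_x1_x3] .
  show "comm_ring_hom (\<lambda>p::mpoly4. p)"
    by standard simp_all
qed (simp_all add: swap_x1_x3_simps)

definition F_S1_form :: "'a::comm_ring_1 \<Rightarrow> 'a \<Rightarrow> 'a \<Rightarrow> 'a \<Rightarrow> 'a" where
  "F_S1_form x0 x1 x2 x3 = x0^9 + (x1^3 - x2^3) * (x2^3 - x3^3) * (x3^3 - x1^3)"

definition F_S2_form :: "'a::comm_ring_1 \<Rightarrow> 'a \<Rightarrow> 'a \<Rightarrow> 'a \<Rightarrow> 'a" where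
  "F_S2_form x0 x1 x2 x3 = F_S1_form x0 x1 x2 x3 * (x0^9 - x1^3 * x2^3 * x3^3) + x1^6 * x2^6 * x3^6"

definition pencil_form :: "'a::comm_ring_1 \<Rightarrow> 'a \<Rightarrow> 'a \<Rightarrow> 'a \<Rightarrow> 'a \<Rightarrow> 'a \<Rightarrow> 'a" where
  "pencil_form a b x0 x1 x2 x3 =
     a * (F_S2_form x0 x1 x2 x3 * (x2^3 - x3^3))
     + b * ((x0^21 + x1^21 + x2^21 - x3^21) - F_S2_form x0 x1 x2 x3 * (x2^3 - x3^3))"

lemma F_S2_pencil_eq_pencil_form: "F_S2_pencil t0 t1 = pencil_form (const4 t0) (const4 t1) X0 X1 X2 X3"
  by (simp add: F_S2_pencil_def pencil_form_def F_S2_def F_S1_def G_2_def F_S2_form_def F_S1_form_def)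

lemma pencil_form_eq_lead_plus:
  "pencil_form a b x0 x1 x2 x3 =
     b * x1^21 + ((a - b) * (F_S2_form x0 x1 x2 x3 * (x2^3 - x3^3)) + b * (x0^21 + x2^21 - x3^21))"
  by (simp add: pencil_form_def algebra_simps)

context comm_ring_hom
begin

lemma hom_pencil_form:
  "hom (pencil_form a b x0 x1 x2 x3) = pencil_form (hom a) (hom b) (hom x0) (hom x1) (hom x2) (hom x3)"
  by (simp only: pencil_form_def F_S2_form_def F_S1_form_def hom_add hom_mult hom_diff hom_power)

end

lemma degree_mult_leI: "degree p \<le> m \<Longrightarrow> degree q \<le> n \<Longrightarrow> degree (p * q) \<le> m + n"
  using degree_mult_le[of p q] by linarith

lemma degree_power_leI: "degree p \<le> m \<Longrightarrow> degree (p ^ k) \<le> k * m"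
  using degree_power_le[of p k] by (metis mult.commute mult_le_mono2 order_trans)

lemma degree_add_le_maxI: "degree p \<le> m \<Longrightarrow> degree q \<le> n \<Longrightarrow> degree (p + q) \<le> max m n"
  using degree_add_le_max[of p q] by linarith

lemma degree_diff_le_maxI:
  "degree p \<le> m \<Longrightarrow> degree q \<le> n \<Longrightarrow> degree (p - q :: 'a::ab_group_add poly) \<le> max m n"
  using degree_diff_le_max[of p q] by linarith

lemma swap_x1_x3_F_S2_pencil:
  "swap_x1_x3 (F_S2_pencil t0 t1) = pencil_form (const4 t0) (const4 t1) X0 X3 X2 X1"
  unfolding F_S2_pencil_eq_pencil_form comm_ring_hom.hom_pencil_form[OF comm_ring_hom_swap_x1_x3]
  by (simp only: swap_x1_x3_simps)

lemma swap_x1_x3_F_S2_pencil_eq_monom_plus: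
  obtains R where "swap_x1_x3 (F_S2_pencil t0 t1) = monom [:[:[:t1:]:]:] 21 + R" "degree R \<le> 12"
proof
  have atoms: "degree X0 \<le> 0" "degree X1 \<le> 0" "degree X2 \<le> 0" "degree X3 \<le> 1"
    "degree (const4 c) \<le> 0" for c
    by (simp_all add: X0_def X1_def X2_def X3_def const4_def)
  let ?R = "(const4 t0 - const4 t1) * (F_S2_form X0 X3 X2 X1 * (X2^3 - X1^3))
    + const4 t1 * (X0^21 + X2^21 - X1^21)"
  show "swap_x1_x3 (F_S2_pencil t0 t1) = monom [:[:[:t1:]:]:] 21 + ?R"
    unfolding swap_x1_x3_F_S2_pencil pencil_form_eq_lead_plus
    by (simp add: const4_def X3_def monom_altdef)
  show "degree ?R \<le> 12"
    unfolding F_S2_form_def F_S1_form_def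
    by (rule order.trans,
        (rule degree_add_le_maxI degree_diff_le_maxI degree_mult_leI degree_power_leI atoms)+)
      simp
qed

lemma degree_swap_x1_x3_F_S2_pencil:
  assumes "t1 \<noteq> 0"
  shows "degree (swap_x1_x3 (F_S2_pencil t0 t1)) = 21"
    and "lead_coeff (swap_x1_x3 (F_S2_pencil t0 t1)) = [:[:[:t1:]:]:]"
proof -
  obtain R where eq: "swap_x1_x3 (F_S2_pencil t0 t1) = monom [:[:[:t1:]:]:] 21 + R"
    and "degree R \<le> 12"
    by (rule swap_x1_x3_F_S2_pencil_eq_monom_plus)
  then have "degree R < degree (monom [:[:[:t1:]:]:] 21)"
    using assms by (simp add: degree_monom_eq)
  then show "degree (swap_x1_x3 (F_S2_pencil t0 t1)) = 21"
    using assms by (simp add: eq degree_add_eq_left degree_monom_eq)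
  with \<open>degree R \<le> 12\<close> show "lead_coeff (swap_x1_x3 (F_S2_pencil t0 t1)) = [:[:[:t1:]:]:]"
    by (simp add: eq coeff_eq_0)
qed

text \<open>\<open>on_line q = q(0, 1, 1 + y)\<close>.\<close>

definition on_line :: "complex poly poly poly \<Rightarrow> complex poly" where
  "on_line = eval_poly (eval_poly (eval_poly (\<lambda>c. [:c:]) 0) 1) [:1, 1:]"

lemma comm_ring_hom_on_line: "comm_ring_hom on_line"
  unfolding on_line_def by (intro comm_ring_hom_eval_poly comm_ring_hom_const_poly)

lemma on_line_0 [simp]: "on_line 0 = 0"
  by (simp add: on_line_def)

lemma swap_x1_x3_F_S2_pencil_mod_line:
  "map_poly (\<lambda>a. poly (on_line a) 0) (swap_x1_x3 (F_S2_pencil t0 t1)) = monom t1 21"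
proof -
  have hom: "comm_ring_hom (map_poly (\<lambda>a. poly (on_line a) 0))"
    using comm_ring_hom.comm_ring_hom_map_poly[OF comm_ring_hom_comp[OF comm_ring_hom_poly
          comm_ring_hom_on_line]] .
  show ?thesis
    unfolding swap_x1_x3_F_S2_pencil comm_ring_hom.hom_pencil_form[OF hom]
    by (simp add: on_line_def X0_def X1_def X2_def X3_def const4_def map_poly_pCons
        one_pCons[symmetric] pencil_form_def F_S2_form_def F_S1_form_def monom_altdef)
qed

lemma coeff_on_line_swap_x1_x3_F_S2_pencil:
  "coeff (on_line (coeff (swap_x1_x3 (F_S2_pencil t0 t1)) 0)) 1 = 21 * t1"
proof -
  have hom: "comm_ring_hom (\<lambda>p. on_line (poly p 0))"
    using comm_ring_hom_comp[OF comm_ring_hom_on_line comm_ring_hom_poly] .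
  have "on_line (poly (swap_x1_x3 (F_S2_pencil t0 t1)) 0) = smult t1 ([:1, 1:]^21 - 1)"
    unfolding swap_x1_x3_F_S2_pencil comm_ring_hom.hom_pencil_form[OF hom]
    by (simp add: on_line_def X0_def X1_def X2_def X3_def const4_def
        one_pCons[symmetric] pencil_form_def F_S2_form_def F_S1_form_def)
  then show ?thesis
    by (simp add: poly_0_coeff_0 coeff_linear_poly_power)
qed

lemma irreducible_swap_x1_x3_F_S2_pencil:
  assumes "t1 \<noteq> 0"
  shows "irreducible (swap_x1_x3 (F_S2_pencil t0 t1))"
proof (rule eisenstein_irreducible[OF comm_ring_hom_on_line])
  let ?Q = "swap_x1_x3 (F_S2_pencil t0 t1)"
  show "lead_coeff ?Q dvd 1"
    unfolding degree_swap_x1_x3_F_S2_pencil(2)[OF assms]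
    using assms by (simp add: is_unit_const_poly_iff dvd_field_iff)
  show "degree ?Q > 0"
    using assms by (simp add: degree_swap_x1_x3_F_S2_pencil)
  show "poly (on_line (coeff ?Q i)) 0 = 0" if "i < degree ?Q" for i
    using arg_cong[OF swap_x1_x3_F_S2_pencil_mod_line[of t0 t1], of "\<lambda>p. coeff p i"] that assms
    by (simp add: degree_swap_x1_x3_F_S2_pencil coeff_map_poly)
  show "coeff (on_line (coeff ?Q 0)) 1 \<noteq> 0"
    unfolding coeff_on_line_swap_x1_x3_F_S2_pencil using assms by simp
qed

theorem lemmaA5:
  fixes t0 t1 :: complex
  assumes "(t0, t1) \<noteq> (0, 0)"
    and "\<not> (\<exists>c. c \<noteq> 0 \<and> t0 = c * 1 \<and> t1 = c * 0)"
  shows "irreducible (F_S2_pencil t0 t1)"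
proof -
  have "t1 \<noteq> 0"
    using assms by auto
  then show ?thesis
    using irreducible_if_irreducible_image[OF comm_ring_hom_swap_x1_x3 comm_ring_hom_swap_x1_x3]
      irreducible_swap_x1_x3_F_S2_pencil by simp
qed

end
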